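(* Under Assumptions 1-MP, 2-MP(a) and 3-MP, $$\frac1{\mathcal{T}}\sum_{t=1}^{\mathcal{T}}\mathbb{E}[\ddot W_t^2]=\sum_{g\in\mathcal{G}}\tilde w^{g,within}(g)+\sum_{g\in\mathcal{G}}\sum_{k\in\mathcal{G},k>g}\big\{\tilde w^{g,post}(g,k)+\tilde w^{k,post}(g,k)+\tilde w^{long}(g,k)\big\}.$$
   Context: Multi-period setup: periods $t=1,\dots,\mathcal{T}$; timing group $G\in\mathcal{G}\subseteq\{2,\dots,\mathcal{T}+1\}$ ($G=\mathcal{T}+1$: never treated), dose $D\ge0$ with $D=0$ exactly for never-treated units; $W_t:=D\mathbf{1}\{t\ge G\}$. 1-MP: i.i.d. sampling of $(Y_1,\dots,Y_{\mathcal{T}},D,G)$, $D$ square-integrable. 2-MP(a): support of $D$ is $\{0\}\cup\mathcal{D}_+$, $\mathcal{D}_+\subset(0,\infty)$, $\mathbb{P}(D=0)>0$. 3-MP: no anticipation and staggered adoption ($W_1=0$, $W_{t-1}=d\Rightarrow W_t=d$). $\bar W_i:=\frac1{\mathcal{T}}\sum_tW_{it}$, $\ddot W_{it}:=(W_{it}-\bar W_i)-(\mathbb{E}[W_t]-\frac1{\mathcal{T}}\sum_s\mathbb{E}[W_s])$. $p_g:=\mathbb{P}(G=g)$, $\bar G_g:=(\mathcal{T}-g+1)/\mathcal{T}$. $\tilde w^{g,within}(g):=\mathrm{var}(D\mid G=g)(1-\bar G_g)\bar G_g\,p_g$; $\tilde w^{g,post}(g,k):=\mathbb{E}[D\mid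 G=g]^2(1-\bar G_g)(\bar G_g-\bar G_k)p_gp_k$; $\tilde w^{k,post}(g,k):=\mathbb{E}[D\mid G=k]^2\bar G_k(\bar G_g-\bar G_k)p_gp_k$; $\tilde w^{long}(g,k):=(\mathbb{E}[D\mid G=g]-\mathbb{E}[D\mid G=k])^2\bar G_k(1-\bar G_g)p_gp_k$. *)

theory Defs
  imports "HOL-Probability.Probability"
begin

definition Wt :: "('a \<Rightarrow> real) \<Rightarrow> ('a \<Rightarrow> nat) \<Rightarrow> nat \<Rightarrow> 'a \<Rightarrow> real" where
  "Wt D G t \<omega> = D \<omega> * (if t \<ge> G \<omega> then 1 else 0)"

definition Wbar :: "('a \<Rightarrow> real) \<Rightarrow> ('a \<Rightarrow> nat) \<Rightarrow> nat \<Rightarrow> 'a \<Rightarrow> real" where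
  "Wbar D G T \<omega> = (1 / real T) * (\<Sum>t\<in>{1..T}. Wt D G t \<omega>)"

definition Wdd :: "'a measure \<Rightarrow> ('a \<Rightarrow> real) \<Rightarrow> ('a \<Rightarrow> nat) \<Rightarrow> nat \<Rightarrow> nat \<Rightarrow> 'a \<Rightarrow> real" where
  "Wdd M D G T t \<omega> = (Wt D G t \<omega> - Wbar D G T \<omega>)
     - ((\<integral>x. Wt D G t x \<partial>M) - (1 / real T) * (\<Sum>s\<in>{1..T}. \<integral>x. Wt D G s x \<partial>M))"

definition pg :: "'a measure \<Rightarrow> ('a \<Rightarrow> nat) \<Rightarrow> nat \<Rightarrow> real" where
  "pg M G g = measure M {\<omega> \<in> space M. G \<omega> = g}"

definition Gbar :: "nat \<Rightarrow> nat \<Rightarrow> real" where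
  "Gbar T g = (real T - real g + 1) / real T"

definition condE :: "'a measure \<Rightarrow> ('a \<Rightarrow> real) \<Rightarrow> ('a \<Rightarrow> nat) \<Rightarrow> nat \<Rightarrow> real" where
  "condE M D G g = (\<integral>\<omega>. D \<omega> * indicator {x. G x = g} \<omega> \<partial>M) / pg M G g"

definition condVar :: "'a measure \<Rightarrow> ('a \<Rightarrow> real) \<Rightarrow> ('a \<Rightarrow> nat) \<Rightarrow> nat \<Rightarrow> real" where
  "condVar M D G g =
     (\<integral>\<omega>. (D \<omega> - condE M D G g)\<^sup>2 * indicator {x. G x = g} \<omega> \<partial>M) / pg M G g"

definition w_within :: "'a measure \<Rightarrow> ('a \<Rightarrow> real) \<Rightarrow> ('a \<Rightarrow> nat) \<Rightarrow> nat \<Rightarrow> nat \<Rightarrow> real" where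
  "w_within M D G T g = condVar M D G g * (1 - Gbar T g) * Gbar T g * pg M G g"

definition w_gpost :: "'a measure \<Rightarrow> ('a \<Rightarrow> real) \<Rightarrow> ('a \<Rightarrow> nat) \<Rightarrow> nat \<Rightarrow> nat \<Rightarrow> nat \<Rightarrow> real" where
  "w_gpost M D G T g k = (condE M D G g)\<^sup>2 * (1 - Gbar T g) * (Gbar T g - Gbar T k) * pg M G g * pg M G k"

definition w_kpost :: "'a measure \<Rightarrow> ('a \<Rightarrow> real) \<Rightarrow> ('a \<Rightarrow> nat) \<Rightarrow> nat \<Rightarrow> nat \<Rightarrow> nat \<Rightarrow> real" where
  "w_kpost M D G T g k = (condE M D G k)\<^sup>2 * Gbar T k * (Gbar T g - Gbar T k) * pg M G g * pg M G k"

definition w_long :: "'a measure \<Rightarrow> ('a \<Rightarrow> real) \<Rightarrow> ('a \<Rightarrow> nat) \<Rightarrow> nat \<Rightarrow> nat \<Rightarrow> nat \<Rightarrow> real" where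
  "w_long M D G T g k = (condE M D G g - condE M D G k)\<^sup>2 * Gbar T k * (1 - Gbar T g) * pg M G g * pg M G k"

end

theory Submission
  imports Defs
begin

text \<open>
  On the event G = g the two-way demeaned treatment equals D * c_t(g) minus its mean, where
  c_t(g) = 1{t >= g} - Gbar_g is the time-demeaned adoption indicator of cohort g. So E[Wdd_t^2]
  is the variance of D * c_t(G); expressed through the cohort moments E[D^2; G = g] and
  E[D; G = g], its time average becomes a quadratic form in the covariances
  (1/T) sum_t c_t(g) c_t(k) = Gbar_max(g,k) (1 - Gbar_min(g,k)) of the adoption paths.
  Splitting this form into its diagonal and its pairs g < k, and using sum_g p_g = 1,
  rearranges it into the within, post and long weights.
\<close>

definition adopt_dev :: "nat \<Rightarrow> nat \<Rightarrow> nat \<Rightarrow> real" where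
  "adopt_dev T t g = (if g \<le> t then 1 else 0) - Gbar T g"

lemma mean_adoption_indicator:
  assumes "1 \<le> g" "g \<le> T + 1" "T \<ge> 1"
  shows "(1 / real T) * (\<Sum>t\<in>{1..T}. if g \<le> t then 1 else 0 :: real) = Gbar T g"
proof -
  have "(\<Sum>t\<in>{1..T}. if g \<le> t then 1 else 0 :: real) = card {t\<in>{1..T}. g \<le> t}"
    by (simp add: sum.inter_filter[symmetric])
  also have "{t\<in>{1..T}. g \<le> t} = {g..T}" using assms by auto
  finally show ?thesis using assms by (simp add: Gbar_def of_nat_diff)
qed

lemma mean_adopt_dev_product_le:
  assumes "1 \<le> g" "g \<le> k" "k \<le> T + 1" "T \<ge> 1"
  shows "(1 / real T) * (\<Sum>t\<in>{1..T}. adopt_dev T t g * adopt_dev T t k)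
     = Gbar T k * (1 - Gbar T g)"
proof -
  let ?i = "\<lambda>g t. if g \<le> t then 1 else 0 :: real"
  have "(\<Sum>t\<in>{1..T}. adopt_dev T t g * adopt_dev T t k)
     = (\<Sum>t\<in>{1..T}. ?i k t - Gbar T k * ?i g t - Gbar T g * ?i k t + Gbar T g * Gbar T k)"
    using assms by (intro sum.cong) (auto simp: adopt_dev_def algebra_simps)
  also have "\<dots> = (\<Sum>t\<in>{1..T}. ?i k t) - Gbar T k * (\<Sum>t\<in>{1..T}. ?i g t)
       - Gbar T g * (\<Sum>t\<in>{1..T}. ?i k t) + real T * (Gbar T g * Gbar T k)"
    by (simp add: sum.distrib sum_subtractf sum_distrib_left)
  also have "(\<Sum>t\<in>{1..T}. ?i g t) = real T * Gbar T g"
    using mean_adoption_indicator[of g T] assms by (simp add: field_simps)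
  also have "(\<Sum>t\<in>{1..T}. ?i k t) = real T * Gbar T k"
    using mean_adoption_indicator[of k T] assms by (simp add: field_simps)
  finally show ?thesis using assms by (simp add: field_simps)
qed

lemma mean_adopt_dev_product:
  assumes "1 \<le> g" "g \<le> T + 1" "1 \<le> k" "k \<le> T + 1" "T \<ge> 1"
  shows "(1 / real T) * (\<Sum>t\<in>{1..T}. adopt_dev T t g * adopt_dev T t k)
     = Gbar T (max g k) * (1 - Gbar T (min g k))"
proof (cases "g \<le> k")
  case True
  then show ?thesis using assms mean_adopt_dev_product_le[of g k T] by simp
next
  case False
  then show ?thesis using assms mean_adopt_dev_product_le[of k g T] by (simp add: mult.commute)
qed

lemma sum_pairs_split_diagonal:
  fixes F :: "'a::linorder \<Rightarrow> 'a \<Rightarrow> 'b::comm_monoid_add"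
  assumes "finite A"
  shows "(\<Sum>g\<in>A. \<Sum>k\<in>A. F g k) = (\<Sum>g\<in>A. F g g) + (\<Sum>g\<in>A. \<Sum>k\<in>{k\<in>A. g < k}. F g k + F k g)"
proof -
  have row: "(\<Sum>k\<in>A. F g k) = F g g + (\<Sum>k\<in>{k\<in>A. g < k}. F g k) + (\<Sum>k\<in>{k\<in>A. k < g}. F g k)"
    if "g \<in> A" for g
  proof -
    have "A = insert g ({k\<in>A. g < k} \<union> {k\<in>A. k < g})" using that by auto
    then have "(\<Sum>k\<in>A. F g k) = (\<Sum>k\<in>insert g ({k\<in>A. g < k} \<union> {k\<in>A. k < g}). F g k)"
      by simp
    also have "\<dots> = F g g + ((\<Sum>k\<in>{k\<in>A. g < k}. F g k) + (\<Sum>k\<in>{k\<in>A. k < g}. F g k))"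
      using assms by (subst sum.insert, auto, subst sum.union_disjoint, auto)
    finally show ?thesis by (simp add: add.assoc)
  qed
  have "(\<Sum>g\<in>A. \<Sum>k\<in>{k\<in>A. k < g}. F g k) = (\<Sum>g\<in>A. \<Sum>k\<in>{k\<in>A. g < k}. F k g)"
    using sum.swap_restrict[OF assms assms, of F "\<lambda>g k. k < g"] by simp
  then show ?thesis by (simp add: row sum.distrib add_ac)
qed

lemma average_variance_expansion:
  fixes c :: "nat \<Rightarrow> 'a \<Rightarrow> real" and m1 m2 :: "'a \<Rightarrow> real"
  shows "(1 / real T) * (\<Sum>t\<in>{1..T}. (\<Sum>g\<in>A. m2 g * (c t g)\<^sup>2) - (\<Sum>g\<in>A. m1 g * c t g)\<^sup>2)
    = (\<Sum>g\<in>A. m2 g * ((1 / real T) * (\<Sum>t\<in>{1..T}. c t g * c t g)))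
      - (\<Sum>g\<in>A. \<Sum>k\<in>A. m1 g * m1 k * ((1 / real T) * (\<Sum>t\<in>{1..T}. c t g * c t k)))"
proof -
  have sq: "(\<Sum>t\<in>{1..T}. \<Sum>g\<in>A. m2 g * (c t g)\<^sup>2) = (\<Sum>g\<in>A. m2 g * (\<Sum>t\<in>{1..T}. c t g * c t g))"
    by (subst sum.swap) (simp add: sum_distrib_left power2_eq_square)
  have "(\<Sum>t\<in>{1..T}. (\<Sum>g\<in>A. m1 g * c t g)\<^sup>2)
      = (\<Sum>t\<in>{1..T}. \<Sum>g\<in>A. \<Sum>k\<in>A. m1 g * m1 k * (c t g * c t k))"
    by (simp add: power2_eq_square sum_product algebra_simps)
  also have "\<dots> = (\<Sum>g\<in>A. \<Sum>t\<in>{1..T}. \<Sum>k\<in>A. m1 g * m1 k * (c t g * c t k))"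
    by (rule sum.swap)
  also have "\<dots> = (\<Sum>g\<in>A. \<Sum>k\<in>A. \<Sum>t\<in>{1..T}. m1 g * m1 k * (c t g * c t k))"
    by (subst sum.swap) (rule refl)
  finally have cross: "(\<Sum>t\<in>{1..T}. (\<Sum>g\<in>A. m1 g * c t g)\<^sup>2)
      = (\<Sum>g\<in>A. \<Sum>k\<in>A. m1 g * m1 k * (\<Sum>t\<in>{1..T}. c t g * c t k))"
    by (simp add: sum_distrib_left)
  show ?thesis
    unfolding sum_subtractf sq cross by (simp add: sum_distrib_left right_diff_distrib mult.left_commute)
qed

lemma weighted_variance_decomposition:
  fixes p mu v Gb :: "'a::linorder \<Rightarrow> real"
  assumes fin: "finite A" and p_sum: "sum p A = 1"
  shows "(\<Sum>g\<in>A. (v g + (mu g)\<^sup>2) * p g * (Gb g * (1 - Gb g)))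
      - (\<Sum>g\<in>A. \<Sum>k\<in>A. (mu g * p g) * (mu k * p k) * (Gb (max g k) * (1 - Gb (min g k))))
    = (\<Sum>g\<in>A. v g * (1 - Gb g) * Gb g * p g)
      + (\<Sum>g\<in>A. \<Sum>k\<in>{k\<in>A. g < k}. (mu g)\<^sup>2 * (1 - Gb g) * (Gb g - Gb k) * p g * p k
          + (mu k)\<^sup>2 * Gb k * (Gb g - Gb k) * p g * p k
          + (mu g - mu k)\<^sup>2 * Gb k * (1 - Gb g) * p g * p k)"
proof -
  \<comment> \<open>each pair term is H g k + H k g - 2 C g k, and the H terms sum to a diagonal sum since sum p = 1\<close>
  define a where "a g = Gb g * (1 - Gb g)" for g
  define H where "H g k = p g * p k * (mu g)\<^sup>2 * a g" for g k
  define C where "C g k = mu g * mu k * p g * p k * (Gb k * (1 - Gb g))" for g k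
  have cross: "(\<Sum>g\<in>A. \<Sum>k\<in>A. (mu g * p g) * (mu k * p k) * (Gb (max g k) * (1 - Gb (min g k))))
     = (\<Sum>g\<in>A. (mu g)\<^sup>2 * (p g)\<^sup>2 * a g) + (\<Sum>g\<in>A. \<Sum>k\<in>{k\<in>A. g < k}. 2 * C g k)"
    unfolding sum_pairs_split_diagonal[OF fin]
    by (intro arg_cong2[where f="(+)"] sum.cong refl)
      (auto simp: a_def C_def power2_eq_square max_def min_def algebra_simps)
  have "(\<Sum>g\<in>A. \<Sum>k\<in>A. H g k) = (\<Sum>g\<in>A. (mu g)\<^sup>2 * p g * a g)"
    using p_sum by (simp add: H_def sum_distrib_left[symmetric] sum_distrib_right[symmetric] algebra_simps)
  then have mixed: "(\<Sum>g\<in>A. \<Sum>k\<in>{k\<in>A. g < k}. H g k + H k g)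
      = (\<Sum>g\<in>A. (mu g)\<^sup>2 * p g * a g) - (\<Sum>g\<in>A. (mu g)\<^sup>2 * (p g)\<^sup>2 * a g)"
    unfolding sum_pairs_split_diagonal[OF fin] by (simp add: H_def power2_eq_square algebra_simps)
  have pairs: "(\<Sum>g\<in>A. \<Sum>k\<in>{k\<in>A. g < k}. (mu g)\<^sup>2 * (1 - Gb g) * (Gb g - Gb k) * p g * p k
          + (mu k)\<^sup>2 * Gb k * (Gb g - Gb k) * p g * p k
          + (mu g - mu k)\<^sup>2 * Gb k * (1 - Gb g) * p g * p k)
     = (\<Sum>g\<in>A. \<Sum>k\<in>{k\<in>A. g < k}. H g k + H k g) - (\<Sum>g\<in>A. \<Sum>k\<in>{k\<in>A. g < k}. 2 * C g k)"
    unfolding sum_subtractf[symmetric]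
    by (intro sum.cong refl) (simp add: H_def C_def a_def power2_eq_square algebra_simps)
  show ?thesis
    unfolding cross pairs mixed by (simp add: a_def sum.distrib sum_subtractf algebra_simps)
qed

definition group_moment :: "'a measure \<Rightarrow> ('a \<Rightarrow> real) \<Rightarrow> ('a \<Rightarrow> nat) \<Rightarrow> nat \<Rightarrow> nat \<Rightarrow> real" where
  "group_moment M D G n g = (\<integral>\<omega>. D \<omega> ^ n * indicator {x. G x = g} \<omega> \<partial>M)"

lemma sum_indicator_group:
  fixes f :: "'b \<Rightarrow> real"
  assumes "finite A" "G w \<in> A"
  shows "(\<Sum>g\<in>A. f g * indicator {x. G x = g} w) = f (G w)"
proof -
  have "(\<Sum>g\<in>A. f g * indicator {x. G x = g} w) = (\<Sum>g\<in>A. if G w = g then f g else 0)"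
    by (intro sum.cong) (auto simp: indicator_def)
  then show ?thesis using assms by (simp add: sum.delta)
qed

lemma group_moment_1_eq:
  assumes "pg M G g \<noteq> 0"
  shows "group_moment M D G 1 g = condE M D G g * pg M G g"
  using assms by (simp add: group_moment_def condE_def)

context
  fixes M :: "'a measure" and D :: "'a \<Rightarrow> real" and G :: "'a \<Rightarrow> nat"
  assumes prob: "prob_space M"
    and G_meas[measurable]: "G \<in> M \<rightarrow>\<^sub>M count_space UNIV"
    and D_meas[measurable]: "D \<in> borel_measurable M"
    and D_sq_int: "integrable M (\<lambda>\<omega>. (D \<omega>)\<^sup>2)"
begin

interpretation prob_space M by (fact prob)

lemma integrable_group_moment:
  assumes "n \<le> 2"
  shows "integrable M (\<lambda>\<omega>. D \<omega> ^ n * indicator {x. G x = g} \<omega>)"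
proof -
  have "integrable M (\<lambda>\<omega>. D \<omega> ^ n)"
  proof -
    have "n = 0 \<or> n = 1 \<or> n = 2" using assms by auto
    then show ?thesis
      using D_sq_int square_integrable_imp_integrable[OF D_meas D_sq_int] by auto
  qed
  moreover have "{x\<in>space M. G x = g} \<in> sets M" by measurable
  ultimately have "integrable M (\<lambda>\<omega>. D \<omega> ^ n * indicator {x\<in>space M. G x = g} \<omega>)"
    by (rule integrable_real_mult_indicator[rotated])
  then show ?thesis
    by (rule Bochner_Integration.integrable_cong[THEN iffD1, rotated 2]) (auto simp: indicator_def)
qed

lemmas integrable_group_moments =
  integrable_group_moment[of 0, simplified] integrable_group_moment[of 1, simplified]
  integrable_group_moment[of 2, simplified]

lemma group_moment_0_eq: "group_moment M D G 0 g = pg M G g"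
  unfolding group_moment_def pg_def
  by (auto intro: arg_cong[where f="measure M"])

lemma integral_quadratic_by_group:
  assumes fin: "finite A" and G_in: "AE \<omega> in M. G \<omega> \<in> A"
  shows "(\<integral>\<omega>. (D \<omega>)\<^sup>2 * a (G \<omega>) + D \<omega> * b (G \<omega>) + c (G \<omega>) \<partial>M)
    = (\<Sum>g\<in>A. a g * group_moment M D G 2 g + b g * group_moment M D G 1 g + c g * pg M G g)"
proof -
  let ?I = "\<lambda>n g \<omega>. D \<omega> ^ n * indicator {x. G x = g} \<omega>"
  have "(\<integral>\<omega>. (D \<omega>)\<^sup>2 * a (G \<omega>) + D \<omega> * b (G \<omega>) + c (G \<omega>) \<partial>M)
      = (\<integral>\<omega>. (\<Sum>g\<in>A. a g * ?I 2 g \<omega> + b g * ?I 1 g \<omega> + c g * ?I 0 g \<omega>) \<partial>M)"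
  proof (rule integral_cong_AE)
    show "AE \<omega> in M. (D \<omega>)\<^sup>2 * a (G \<omega>) + D \<omega> * b (G \<omega>) + c (G \<omega>)
        = (\<Sum>g\<in>A. a g * ?I 2 g \<omega> + b g * ?I 1 g \<omega> + c g * ?I 0 g \<omega>)"
      using G_in
    proof eventually_elim
      case (elim \<omega>)
      have "(\<Sum>g\<in>A. a g * ?I 2 g \<omega> + b g * ?I 1 g \<omega> + c g * ?I 0 g \<omega>)
          = (\<Sum>g\<in>A. ((D \<omega>)\<^sup>2 * a g + D \<omega> * b g + c g) * indicator {x. G x = g} \<omega>)"
        by (intro sum.cong) (auto simp: algebra_simps)
      also have "\<dots> = (D \<omega>)\<^sup>2 * a (G \<omega>) + D \<omega> * b (G \<omega>) + c (G \<omega>)"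
        using fin elim by (rule sum_indicator_group)
      finally show ?case by simp
    qed
  qed measurable
  also have "\<dots> = (\<Sum>g\<in>A. a g * group_moment M D G 2 g + b g * group_moment M D G 1 g
      + c g * group_moment M D G 0 g)"
    by (simp add: group_moment_def integrable_group_moments Bochner_Integration.integral_sum
        Bochner_Integration.integral_add Bochner_Integration.integrable_add)
  finally show ?thesis by (simp add: group_moment_0_eq)
qed

lemma sum_pg_eq_1:
  assumes "finite A" "AE \<omega> in M. G \<omega> \<in> A"
  shows "sum (pg M G) A = 1"
  using integral_quadratic_by_group[OF assms, of "\<lambda>_. 0" "\<lambda>_. 0" "\<lambda>_. 1"] prob_space by simp

lemma group_moment_2_eq:
  assumes p_pos: "pg M G g > 0"
  shows "group_moment M D G 2 g = (condVar M D G g + (condE M D G g)\<^sup>2) * pg M G g"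
proof -
  define \<mu> where "\<mu> = condE M D G g"
  let ?I = "\<lambda>n \<omega>. D \<omega> ^ n * indicator {x. G x = g} \<omega>"
  have "condVar M D G g * pg M G g = (\<integral>\<omega>. (D \<omega> - \<mu>)\<^sup>2 * indicator {x. G x = g} \<omega> \<partial>M)"
    using p_pos by (simp add: condVar_def \<mu>_def)
  also have "\<dots> = (\<integral>\<omega>. ?I 2 \<omega> - 2 * \<mu> * ?I 1 \<omega> + \<mu>\<^sup>2 * ?I 0 \<omega> \<partial>M)"
    by (intro Bochner_Integration.integral_cong) (auto simp: power2_eq_square algebra_simps)
  also have "\<dots> = group_moment M D G 2 g - 2 * \<mu> * group_moment M D G 1 g + \<mu>\<^sup>2 * group_moment M D G 0 g"
    by (simp add: group_moment_def integrable_group_moments Bochner_Integration.integrable_diff)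
  also have "\<dots> = group_moment M D G 2 g - \<mu>\<^sup>2 * pg M G g"
    unfolding group_moment_0_eq group_moment_1_eq[OF less_imp_neq[OF p_pos, symmetric]] \<mu>_def
    by (simp add: power2_eq_square)
  finally show ?thesis by (simp add: \<mu>_def algebra_simps)
qed


lemma integral_Wt:
  assumes "finite A" "AE \<omega> in M. G \<omega> \<in> A"
  shows "(\<integral>\<omega>. Wt D G t \<omega> \<partial>M) = (\<Sum>g\<in>A. group_moment M D G 1 g * (if g \<le> t then 1 else 0))"
proof -
  have "(\<integral>\<omega>. Wt D G t \<omega> \<partial>M)
      = (\<integral>\<omega>. (D \<omega>)\<^sup>2 * 0 + D \<omega> * (\<lambda>g. if g \<le> t then 1 else 0) (G \<omega>) + 0 \<partial>M)"
    by (simp add: Wt_def)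
  also have "\<dots> = (\<Sum>g\<in>A. group_moment M D G 1 g * (if g \<le> t then 1 else 0))"
    using integral_quadratic_by_group[OF assms, of "\<lambda>_. 0" _ "\<lambda>_. 0"] by (simp add: mult.commute)
  finally show ?thesis .
qed

lemma Wdd_AE_eq:
  assumes fin: "finite A" and G_in: "AE \<omega> in M. G \<omega> \<in> A"
    and A_range: "A \<subseteq> {1..T + 1}" and T_pos: "T \<ge> 1"
  shows "AE \<omega> in M. Wdd M D G T t \<omega>
    = D \<omega> * adopt_dev T t (G \<omega>) - (\<Sum>g\<in>A. group_moment M D G 1 g * adopt_dev T t g)"
proof -
  let ?i = "\<lambda>t g. if g \<le> t then 1 else 0 :: real"
  have mean_share: "(1 / real T) * (\<Sum>s\<in>{1..T}. ?i s g) = Gbar T g" if "g \<in> A" for g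
    using mean_adoption_indicator[of g T] A_range that T_pos by auto
  have "(1 / real T) * (\<Sum>s\<in>{1..T}. \<integral>\<omega>. Wt D G s \<omega> \<partial>M)
      = (\<Sum>g\<in>A. group_moment M D G 1 g * ((1 / real T) * (\<Sum>s\<in>{1..T}. ?i s g)))"
    unfolding integral_Wt[OF fin G_in]
    by (subst sum.swap) (simp add: sum_distrib_left mult.left_commute)
  also have "\<dots> = (\<Sum>g\<in>A. group_moment M D G 1 g * Gbar T g)"
    by (intro sum.cong refl) (simp only: mean_share)
  finally have time_demeaned_mean: "(\<integral>\<omega>. Wt D G t \<omega> \<partial>M) - (1 / real T) * (\<Sum>s\<in>{1..T}. \<integral>\<omega>. Wt D G s \<omega> \<partial>M)
      = (\<Sum>g\<in>A. group_moment M D G 1 g * adopt_dev T t g)"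
    unfolding integral_Wt[OF fin G_in] adopt_dev_def
    by (simp add: sum_subtractf right_diff_distrib)
  show ?thesis
    using G_in
  proof eventually_elim
    case (elim \<omega>)
    have "Wbar D G T \<omega> = D \<omega> * ((1 / real T) * (\<Sum>s\<in>{1..T}. ?i s (G \<omega>)))"
      unfolding Wbar_def Wt_def by (simp add: sum_distrib_left mult.left_commute)
    also have "\<dots> = D \<omega> * Gbar T (G \<omega>)"
      by (simp only: mean_share[OF elim])
    finally have "Wbar D G T \<omega> = D \<omega> * Gbar T (G \<omega>)" .
    then show ?case
      unfolding Wdd_def time_demeaned_mean by (simp add: Wt_def adopt_dev_def algebra_simps)
  qed
qed

lemma integral_Wdd_square:
  assumes "finite A" "AE \<omega> in M. G \<omega> \<in> A" "A \<subseteq> {1..T + 1}" "T \<ge> 1"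
  shows "(\<integral>\<omega>. (Wdd M D G T t \<omega>)\<^sup>2 \<partial>M)
    = (\<Sum>g\<in>A. group_moment M D G 2 g * (adopt_dev T t g)\<^sup>2)
      - (\<Sum>g\<in>A. group_moment M D G 1 g * adopt_dev T t g)\<^sup>2"
proof -
  define e where "e = (\<Sum>g\<in>A. group_moment M D G 1 g * adopt_dev T t g)"
  have "(\<integral>\<omega>. (Wdd M D G T t \<omega>)\<^sup>2 \<partial>M)
      = (\<integral>\<omega>. (D \<omega>)\<^sup>2 * (\<lambda>g. (adopt_dev T t g)\<^sup>2) (G \<omega>)
          + D \<omega> * (\<lambda>g. - 2 * e * adopt_dev T t g) (G \<omega>) + (\<lambda>_. e\<^sup>2) (G \<omega>) \<partial>M)"
  proof (rule integral_cong_AE)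
    show "(\<lambda>\<omega>. (Wdd M D G T t \<omega>)\<^sup>2) \<in> borel_measurable M"
      unfolding Wdd_def Wbar_def Wt_def by measurable
    show "AE \<omega> in M. (Wdd M D G T t \<omega>)\<^sup>2 = (D \<omega>)\<^sup>2 * (\<lambda>g. (adopt_dev T t g)\<^sup>2) (G \<omega>)
          + D \<omega> * (\<lambda>g. - 2 * e * adopt_dev T t g) (G \<omega>) + (\<lambda>_. e\<^sup>2) (G \<omega>)"
      using Wdd_AE_eq[OF assms, of t]
    proof eventually_elim
      case (elim \<omega>)
      show ?case unfolding elim e_def by (simp add: power2_eq_square algebra_simps)
    qed
  qed measurable
  also have "\<dots> = (\<Sum>g\<in>A. (adopt_dev T t g)\<^sup>2 * group_moment M D G 2 g
      + (- 2 * e * adopt_dev T t g) * group_moment M D G 1 g + e\<^sup>2 * pg M G g)"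
    by (rule integral_quadratic_by_group[OF assms(1,2)])
  also have "\<dots> = (\<Sum>g\<in>A. group_moment M D G 2 g * (adopt_dev T t g)\<^sup>2)
      - 2 * e * (\<Sum>g\<in>A. group_moment M D G 1 g * adopt_dev T t g) + e\<^sup>2 * sum (pg M G) A"
    unfolding sum.distrib by (simp add: sum_distrib_left sum_distrib_right sum_negf mult_ac)
  finally show ?thesis
    unfolding e_def[symmetric] by (simp add: sum_pg_eq_1[OF assms(1,2)] power2_eq_square)
qed

end

theorem lemma6:
  fixes M :: "'a measure" and D :: "'a \<Rightarrow> real" and G :: "'a \<Rightarrow> nat"
    and T :: nat and GG :: "nat set"
  assumes "prob_space M"
    and "T \<ge> 1"
    and "GG \<subseteq> {2..T+1}"
    and "G \<in> M \<rightarrow>\<^sub>M count_space UNIV"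
    and "D \<in> borel_measurable M"
    and "integrable M (\<lambda>\<omega>. (D \<omega>)\<^sup>2)"
    and "AE \<omega> in M. G \<omega> \<in> GG"
    and "\<forall>g\<in>GG. pg M G g > 0"
    and "AE \<omega> in M. D \<omega> \<ge> 0"
    and "AE \<omega> in M. (D \<omega> = 0 \<longleftrightarrow> G \<omega> = T + 1)"
    and "measure M {\<omega> \<in> space M. D \<omega> = 0} > 0"
  shows "(1 / real T) * (\<Sum>t\<in>{1..T}. \<integral>\<omega>. (Wdd M D G T t \<omega>)\<^sup>2 \<partial>M)
       = (\<Sum>g\<in>GG. w_within M D G T g)
         + (\<Sum>g\<in>GG. \<Sum>k\<in>{k \<in> GG. k > g}.
              w_gpost M D G T g k + w_kpost M D G T g k + w_long M D G T g k)"
proof -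
  note moments = assms(1,4,5,6)
  have fin: "finite GG" using assms(3) finite_subset by blast
  have range: "GG \<subseteq> {1..T + 1}" using assms(3) by auto
  have p_pos: "pg M G g > 0" if "g \<in> GG" for g using assms(8) that by blast
  let ?\<mu> = "condE M D G" and ?v = "condVar M D G" and ?p = "pg M G" and ?Gb = "Gbar T"
  have m1: "group_moment M D G 1 g = ?\<mu> g * ?p g" if "g \<in> GG" for g
    by (rule group_moment_1_eq) (use p_pos[OF that] in simp)
  have m2: "group_moment M D G 2 g = (?v g + (?\<mu> g)\<^sup>2) * ?p g" if "g \<in> GG" for g
    using group_moment_2_eq[OF moments p_pos[OF that]] .
  have cov: "(1 / real T) * (\<Sum>t\<in>{1..T}. adopt_dev T t g * adopt_dev T t k)
      = ?Gb (max g k) * (1 - ?Gb (min g k))" if "g \<in> GG" "k \<in> GG" for g k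
    using that range assms(2) by (intro mean_adopt_dev_product) auto
  have var: "(1 / real T) * (\<Sum>t\<in>{1..T}. adopt_dev T t g * adopt_dev T t g)
      = ?Gb g * (1 - ?Gb g)" if "g \<in> GG" for g
    using cov[OF that that] by simp
  have "(1 / real T) * (\<Sum>t\<in>{1..T}. \<integral>\<omega>. (Wdd M D G T t \<omega>)\<^sup>2 \<partial>M)
      = (\<Sum>g\<in>GG. group_moment M D G 2 g * ((1 / real T) * (\<Sum>t\<in>{1..T}. adopt_dev T t g * adopt_dev T t g)))
        - (\<Sum>g\<in>GG. \<Sum>k\<in>GG. group_moment M D G 1 g * group_moment M D G 1 k
            * ((1 / real T) * (\<Sum>t\<in>{1..T}. adopt_dev T t g * adopt_dev T t k)))"
    unfolding integral_Wdd_square[OF moments fin assms(7) range assms(2)]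
    by (rule average_variance_expansion)
  also have "\<dots> = (\<Sum>g\<in>GG. (?v g + (?\<mu> g)\<^sup>2) * ?p g * (?Gb g * (1 - ?Gb g)))
        - (\<Sum>g\<in>GG. \<Sum>k\<in>GG. (?\<mu> g * ?p g) * (?\<mu> k * ?p k) * (?Gb (max g k) * (1 - ?Gb (min g k))))"
    by (intro arg_cong2[where f="(-)"] sum.cong refl) (simp_all only: m1 m2 cov var)
  also have "\<dots> = (\<Sum>g\<in>GG. w_within M D G T g)
         + (\<Sum>g\<in>GG. \<Sum>k\<in>{k \<in> GG. k > g}.
              w_gpost M D G T g k + w_kpost M D G T g k + w_long M D G T g k)"
    unfolding weighted_variance_decomposition[OF fin sum_pg_eq_1[OF moments fin assms(7)]]
      w_within_def w_gpost_def w_kpost_def w_long_def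
    by (simp add: mult_ac)
  finally show ?thesis .
qed

end
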